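(* Fix $\lambda\in[0,1)$, $p\in[0,1]$, $T>0$, and consider the coupled construction below on $\Omega=\Omega_W\times\Omega_U\times\Omega_0$. Let $\mathcal{C}$ be the set of $\omega\in\Omega$ such that $\lim_{N\to\infty}\sup_{t\in[0,T]}|W^N(\omega,t)-(1+\lambda)t|=0$ and $\lim_{N\to\infty}\frac1N\sum_{k=1}^N\mathbb{I}_{[a,b)}(U(\omega,k))=b-a$ for every $[a,b)\subset[0,1]$ with $a<b$. Assume there is $\mathbf{v}^0\in\overline{\mathcal{V}}^\infty$ such that $\lim_{N\to\infty}\|\mathbf{V}^N(\omega,0)-\mathbf{v}^0\|_w=0$ for all $\omega\in\mathcal{C}$. Then for every $\omega\in\mathcal{C}$, every subsequence of $(\mathbf{X}^N(\omega,\cdot))_{N\ge1}$ has a further subsequence $(\mathbf{X}^{N_i}(\omega,\cdot))$ converging to some $\mathbf{x}=(\mathbf{v},\mathbf{a},\mathbf{l},\mathbf{c})$, in the sense that $d^{\mathbb{Z}_+}(\mathbf{V}^{N_i},\mathbf{v})$, $d^{\mathbb{Z}_+}(\mathbf{A}^{N_i},\mathbf{a})$, $d^{\mathbb{Z}_+}(\mathbf{L}^{N_i},\mathbf{l})$, $d^{\mathbb{Z}_+}(\mathbf{C}^{N_i},\mathbf{c})$ all tend to $0$ as $i\to\infty$; moreover $\mathbf{v}(0)=\mathbf{v}^0$, $\mathbf{a}(0)=\mathbf{l}(0)=\mathbf{c}(0)=0$, and every scalar coordinate $\mathbf{x}_j$ of $\mathbf{x}$ satisfies $|\mathbf{x}_j(a)-\mathbf{x}_j(b)|\le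 L|a-b|$ for all $a,b\in[0,T]$, where $L>0$ is a constant independent of $\omega$, $\mathbf{x}$ and $T$.
   Context: $\mathcal{S}=\{\mathbf{s}\in[0,1]^{\mathbb{Z}_+}:1=\mathbf{s}_0\ge\mathbf{s}_1\ge\cdots\ge0\}$, $\overline{\mathcal{S}}^\infty=\{\mathbf{s}\in\mathcal{S}:\sum_{i\ge1}\mathbf{s}_i<\infty\}$, $\overline{\mathcal{V}}^\infty=\{\mathbf{v}:\mathbf{v}_i=\sum_{j\ge i}\mathbf{s}_j\ \forall i,\text{ for some }\mathbf{s}\in\overline{\mathcal{S}}^\infty\}$; $\|\mathbf{x}\|_w^2=\sum_{i\ge0}2^{-i}\mathbf{x}_i^2$; for $\mathbb{R}^{\mathbb{Z}_+}$-valued functions on $[0,T]$, $d^{\mathbb{Z}_+}(\mathbf{x},\mathbf{y})=\sup_{t\in[0,T]}\|\mathbf{x}(t)-\mathbf{y}(t)\|_w$. Coupled construction: on $(\Omega_W,\mathcal{F}_W,\mathbb{P}_W)$ let $W$ be a Poisson process of rate $1+\lambda$; on $(\Omega_U,\mathcal{F}_U,\mathbb{P}_U)$ let $U(k)$, $k\ge1$, be i.i.d. uniform on $[0,1]$; on $(\Omega_0,\mathcal{F}_0,\mathbb{P}_0)$ let $\mathbf{V}^{(0,N)}$, $N\ge1$, be random variables with values in $\overline{\mathcal{V}}^\infty$ whose coordinates are integer multiples of $1/N$; take the product space $\Omega$. Set $W^N(t)=W(Nt)/N$ and let $t_k$ be the $k$-th jump time of $W^N$. Put $\mathbf{V}^N(0)=\mathbf{V}^{(0,N)}$;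 the processes $\mathbf{A}^N_i,\mathbf{L}^N_i,\mathbf{C}^N_i$ ($i\ge1$) start at $0$ and are constant between jump times; at $t_k$: for each $i\ge1$ with $U(k)\in\frac{\lambda}{1+\lambda}[0,\mathbf{V}^N_{i-1}(t_k-)-\mathbf{V}^N_i(t_k-))$, $\mathbf{A}^N_i$ increases by $1/N$; for each $i\ge1$ with $U(k)\in\frac{\lambda}{1+\lambda}+\frac{1-p}{1+\lambda}[0,\mathbf{V}^N_i(t_k-)-\mathbf{V}^N_{i+1}(t_k-))$, $\mathbf{L}^N_i$ increases by $1/N$; if $U(k)\in[1-\frac{p}{1+\lambda},1)$, $\mathbf{C}^N_j$ increases by $1/N$ for all $1\le j\le \sup\{i:\mathbf{V}^N_i(t_k-)>0\}$. Then $\mathbf{V}^N_i(t)=\mathbf{V}^N_i(0)+\mathbf{A}^N_i(t)-\mathbf{L}^N_i(t)-\mathbf{C}^N_i(t)$ for $i\ge1$ and $\mathbf{V}^N_0=\mathbf{V}^N_1+1$. (This realizes the aggregate queue-length process of an $N$-station system with Poisson($\lambda$) arrivals per station, local service tokens of rate $1-p$ per station, and central service tokens of rate $Np$ serving a longest queue.) $\mathbf{X}^N=(\mathbf{V}^N,\mathbf{A}^N,\mathbf{L}^N,\mathbf{C}^N)$. *)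

theory Defs
  imports Complex_Main
begin

type_synonym seq = "nat \<Rightarrow> real"
type_synonym state = "seq \<times> seq \<times> seq \<times> seq"

definition Sset :: "seq set" where
  "Sset = {s. s 0 = 1 \<and> (\<forall>i. 0 \<le> s i \<and> s i \<le> 1) \<and> (\<forall>i. s (Suc i) \<le> s i)}"

definition Sbar_inf :: "seq set" where
  "Sbar_inf = {s \<in> Sset. summable (\<lambda>i. s (Suc i))}"

definition Vbar_inf :: "seq set" where
  "Vbar_inf = {v. \<exists>s\<in>Sbar_inf. \<forall>i. v i = (\<Sum>j. s (j + i))}"

definition wnorm :: "seq \<Rightarrow> real" where
  "wnorm x = sqrt (\<Sum>i. (1/2) ^ i * (x i)\<^sup>2)"

definition dZ :: "real \<Rightarrow> (real \<Rightarrow> seq) \<Rightarrow> (real \<Rightarrow> seq) \<Rightarrow> real" where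
  "dZ T x y = (SUP t\<in>{0..T}. wnorm (x t - y t))"

definition arr_ev :: "real \<Rightarrow> nat \<Rightarrow> real \<Rightarrow> seq \<Rightarrow> seq" where
  "arr_ev lam N u V i =
     (if 1 \<le> i \<and> 0 \<le> u \<and> u < lam / (1 + lam) * (V (i - 1) - V i) then 1 / real N else 0)"

definition loc_ev :: "real \<Rightarrow> real \<Rightarrow> nat \<Rightarrow> real \<Rightarrow> seq \<Rightarrow> seq" where
  "loc_ev lam p N u V i =
     (if 1 \<le> i \<and> lam / (1 + lam) \<le> u \<and>
         u < lam / (1 + lam) + (1 - p) / (1 + lam) * (V i - V (Suc i)) then 1 / real N else 0)"

definition cen_ev :: "real \<Rightarrow> real \<Rightarrow> nat \<Rightarrow> real \<Rightarrow> seq \<Rightarrow> seq" where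
  "cen_ev lam p N u V i =
     (if 1 \<le> i \<and> 1 - p / (1 + lam) \<le> u \<and> u < 1 \<and> (\<exists>j\<ge>i. 0 < V j) then 1 / real N else 0)"

definition step :: "real \<Rightarrow> real \<Rightarrow> nat \<Rightarrow> real \<Rightarrow> state \<Rightarrow> state" where
  "step lam p N u x =
     (case x of (V, A, L, C) \<Rightarrow>
       let a = arr_ev lam N u V; l = loc_ev lam p N u V; c = cen_ev lam p N u V;
           V1 = (\<lambda>i. V i + a i - l i - c i)
       in ((\<lambda>i. if i = 0 then V1 1 + 1 else V1 i),
           (\<lambda>i. A i + a i), (\<lambda>i. L i + l i), (\<lambda>i. C i + c i)))"

text \<open>State after the first k events (event k uses the mark U k, k \<ge> 1).\<close>
fun chain :: "real \<Rightarrow> real \<Rightarrow> nat \<Rightarrow> seq \<Rightarrow> (nat \<Rightarrow> real) \<Rightarrow> nat \<Rightarrow> state" where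
  "chain lam p N V0 U 0 = (V0, (\<lambda>_. 0), (\<lambda>_. 0), (\<lambda>_. 0))"
| "chain lam p N V0 U (Suc k) = step lam p N (U (Suc k)) (chain lam p N V0 U k)"

text \<open>A Poisson path is given by its jump times tau 1 < tau 2 < ... (tending to infinity).\<close>
definition jump_times :: "(nat \<Rightarrow> real) \<Rightarrow> bool" where
  "jump_times tau \<longleftrightarrow> (\<forall>k\<ge>1. 0 < tau k \<and> tau k < tau (Suc k)) \<and> filterlim tau at_top sequentially"

definition Wpath :: "(nat \<Rightarrow> real) \<Rightarrow> real \<Rightarrow> real" where
  "Wpath tau s = real (card {k. 1 \<le> k \<and> tau k \<le> s})"

definition WN :: "(nat \<Rightarrow> real) \<Rightarrow> nat \<Rightarrow> real \<Rightarrow> real" where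
  "WN tau N t = Wpath tau (real N * t) / real N"

definition XN :: "real \<Rightarrow> real \<Rightarrow> (nat \<Rightarrow> real) \<Rightarrow> (nat \<Rightarrow> real) \<Rightarrow> (nat \<Rightarrow> seq)
                   \<Rightarrow> nat \<Rightarrow> real \<Rightarrow> state" where
  "XN lam p tau U V0 N t = chain lam p N (V0 N) U (card {k. 1 \<le> k \<and> tau k \<le> real N * t})"

definition Xproc :: "real \<Rightarrow> real \<Rightarrow> ('w \<Rightarrow> nat \<Rightarrow> real) \<Rightarrow> ('u \<Rightarrow> nat \<Rightarrow> real)
                   \<Rightarrow> ('z \<Rightarrow> nat \<Rightarrow> seq) \<Rightarrow> 'w \<times> 'u \<times> 'z \<Rightarrow> nat \<Rightarrow> real \<Rightarrow> state" where
  "Xproc lam p tau U V0 \<omega> N t =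
     (case \<omega> of (w, u, z) \<Rightarrow> XN lam p (tau w) (U u) (V0 z) N t)"

definition Vc :: "state \<Rightarrow> seq" where "Vc x = fst x"
definition Ac :: "state \<Rightarrow> seq" where "Ac x = fst (snd x)"
definition Lc :: "state \<Rightarrow> seq" where "Lc x = fst (snd (snd x))"
definition Cc :: "state \<Rightarrow> seq" where "Cc x = snd (snd (snd x))"

definition Cset :: "real \<Rightarrow> real \<Rightarrow> ('w \<Rightarrow> nat \<Rightarrow> real) \<Rightarrow> ('u \<Rightarrow> nat \<Rightarrow> real)
                    \<Rightarrow> ('w \<times> 'u \<times> 'z) set" where
  "Cset lam T tau U = {(w, u, z).
      (\<lambda>N. SUP t\<in>{0..T}. \<bar>WN (tau w) N t - (1 + lam) * t\<bar>) \<longlonglongrightarrow> 0 \<and>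
      (\<forall>a b. 0 \<le> a \<and> a < b \<and> b \<le> 1 \<longrightarrow>
         (\<lambda>N. (\<Sum>k=1..N. if a \<le> U u k \<and> U u k < b then 1 else 0) / real N) \<longlonglongrightarrow> b - a)}"

end

theory Submission
  imports Defs "HOL-Library.Diagonal_Subsequence" "HOL-Analysis.Analysis"
begin

text \<open>
  Each event changes every coordinate of \<open>V, A, L, C\<close> by at most \<open>2/N\<close>, and \<open>N \<cdot> W\<^sup>N(t)\<close>
  counts the events up to time \<open>t\<close>. So for \<open>\<omega> \<in> C\<close> all coordinates of \<open>X\<^sup>N\<close> are bounded
  on \<open>[0,T]\<close> uniformly in \<open>N\<close>, and \<open>2(1+\<lambda>)\<close>-Lipschitz up to an additive error
  \<open>4 sup\<^sub>t |W\<^sup>N(t) - (1+\<lambda>)t|\<close> that vanishes as \<open>N \<rightarrow> \<infinity>\<close>. A diagonal argument over the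
  countably many coordinates and the grid points \<open>kT/(M+1)\<close> gives a subsequence converging
  on the grid; the vanishing Lipschitz defect upgrades this to uniform convergence on
  \<open>[0,T]\<close> with \<open>2(1+\<lambda>)\<close>-Lipschitz limits. Since the weights \<open>2^-i\<close> make the tail of
  the weighted norm uniformly small, coordinatewise uniform convergence yields convergence
  in \<open>dZ\<close>.
\<close>

lemma bounded_family_convergent_subseq:
  fixes x :: "'i::countable \<Rightarrow> nat \<Rightarrow> real"
  assumes "\<And>i. bounded (range (x i))"
  shows "\<exists>s. strict_mono s \<and> (\<forall>i. convergent (\<lambda>n. x i (s n)))"
proof -
  interpret subseqs "\<lambda>m r. convergent (\<lambda>n. x (from_nat m) (r n))"
  proof
    fix m and s :: "nat \<Rightarrow> nat"
    assume "strict_mono s"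
    have "bounded (range (\<lambda>n. x (from_nat m) (s n)))"
      using assms by (rule bounded_subset) auto
    then obtain l r where "strict_mono r" "((\<lambda>n. x (from_nat m) (s n)) \<circ> r) \<longlonglongrightarrow> l"
      using bounded_imp_convergent_subsequence by blast
    then show "\<exists>r. strict_mono r \<and> convergent (\<lambda>n. x (from_nat m) ((s \<circ> r) n))"
      by (auto simp: convergent_def o_def)
  qed
  have "convergent (\<lambda>n. x (from_nat m) (diagseq n))" for m
  proof -
    have "convergent (\<lambda>n. x (from_nat m) ((diagseq \<circ> (+) (Suc m)) n))"
      by (rule diagseq_holds) (auto dest: convergent_subseq_convergent simp: o_def)
    then have "convergent (\<lambda>n. x (from_nat m) (diagseq (n + Suc m)))"
      by (simp add: o_def add.commute)
    then show ?thesis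
      by (rule convergent_ignore_initial_segment[THEN iffD1])
  qed
  then have "convergent (\<lambda>n. x i (diagseq n))" for i
    by (metis from_nat_to_nat)
  then show ?thesis
    using subseq_diagseq by blast
qed

lemma grid_point_near:
  assumes "0 < T" "t \<in> {0..T}"
  obtains k where "k \<le> Suc M" "\<bar>t - real k * T / real (Suc M)\<bar> \<le> T / real (Suc M)"
proof -
  define z where "z = t * real (Suc M) / T"
  have "t * real (Suc M) \<le> T * real (Suc M)"
    using assms by (intro mult_right_mono) auto
  then have z: "0 \<le> z" "z \<le> real (Suc M)" "t = z * (T / real (Suc M))"
    using assms by (auto simp: z_def pos_divide_le_eq)
  define k where "k = nat \<lfloor>z\<rfloor>"
  have k: "real k \<le> z" "z < real k + 1"
    using z by (auto simp: k_def)
  have "\<bar>t - real k * T / real (Suc M)\<bar> = \<bar>z - real k\<bar> * (T / real (Suc M))"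
  proof -
    have "t - real k * T / real (Suc M) = (z - real k) * (T / real (Suc M))"
      by (simp add: z(3) left_diff_distrib diff_divide_distrib)
    then show ?thesis
      using assms by (simp add: abs_mult)
  qed
  also have "\<dots> \<le> T / real (Suc M)"
    using k assms by (intro mult_left_le_one_le) auto
  finally have "\<bar>t - real k * T / real (Suc M)\<bar> \<le> T / real (Suc M)" .
  moreover have "k \<le> Suc M"
    using k z by linarith
  ultimately show thesis
    using that by blast
qed

lemma grid_point_mem:
  assumes "0 < T" "k \<le> Suc M"
  shows "real k * T / real (Suc M) \<in> {0..T}"
proof -
  have "real k * T \<le> real (Suc M) * T"
    using assms by (intro mult_right_mono) auto
  then show ?thesis
    using assms by (auto simp: pos_divide_le_eq)
qed

lemma lipschitz_on_limit:
  fixes f :: "nat \<Rightarrow> 'a::metric_space \<Rightarrow> real"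
  assumes "0 \<le> K" "e \<longlonglongrightarrow> 0"
    and "\<And>n x y. x \<in> S \<Longrightarrow> y \<in> S \<Longrightarrow> \<bar>f n x - f n y\<bar> \<le> K * dist x y + e n"
    and "\<And>x. x \<in> S \<Longrightarrow> (\<lambda>n. f n x) \<longlonglongrightarrow> g x"
  shows "K-lipschitz_on S g"
proof (rule lipschitz_onI)
  fix x y assume xy: "x \<in> S" "y \<in> S"
  have "(\<lambda>n. \<bar>f n x - f n y\<bar>) \<longlonglongrightarrow> \<bar>g x - g y\<bar>"
    by (intro tendsto_intros assms(4) xy)
  moreover have "(\<lambda>n. K * dist x y + e n) \<longlonglongrightarrow> K * dist x y"
    using tendsto_add[OF tendsto_const assms(2)] by simp
  ultimately show "dist (g x) (g y) \<le> K * dist x y"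
    unfolding dist_real_def by (rule LIMSEQ_le) (use assms(3) xy in auto)
qed (fact assms(1))

lemma uniformly_Cauchy_on_if_grid_convergent:
  fixes f :: "nat \<Rightarrow> real \<Rightarrow> real"
  assumes T: "0 < T" and e: "e \<longlonglongrightarrow> 0"
    and lip: "\<And>n x y. x \<in> {0..T} \<Longrightarrow> y \<in> {0..T} \<Longrightarrow> \<bar>f n x - f n y\<bar> \<le> K * \<bar>x - y\<bar> + e n"
    and grid: "\<And>M k. k \<le> Suc M \<Longrightarrow> convergent (\<lambda>n. f n (real k * T / real (Suc M)))"
  shows "uniformly_Cauchy_on {0..T} f"
proof (rule uniformly_Cauchy_onI)
  fix \<epsilon> :: real
  assume "0 < \<epsilon>"
  have "(\<lambda>M. \<bar>K\<bar> * (T / real (Suc M))) \<longlonglongrightarrow> 0"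
    by (intro tendsto_mult_right_zero LIMSEQ_Suc lim_const_over_n)
  then have "\<forall>\<^sub>F M in sequentially. \<bar>K\<bar> * (T / real (Suc M)) < \<epsilon> / 5"
    by (rule order_tendstoD(2)) (use \<open>0 < \<epsilon>\<close> in simp)
  then obtain M where M: "\<bar>K\<bar> * (T / real (Suc M)) < \<epsilon> / 5"
    unfolding eventually_sequentially by blast
  define p where "p k = real k * T / real (Suc M)" for k
  have p: "p k \<in> {0..T}" if "k \<le> Suc M" for k
    unfolding p_def using T that by (rule grid_point_mem)
  define L where "L k = lim (\<lambda>n. f n (p k))" for k
  have "\<forall>k\<in>{..Suc M}. \<forall>\<^sub>F n in sequentially. \<bar>f n (p k) - L k\<bar> < \<epsilon> / 10"
  proof
    fix k
    assume "k \<in> {..Suc M}"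
    then have "(\<lambda>n. f n (p k)) \<longlonglongrightarrow> L k"
      using grid by (simp add: L_def p_def convergent_LIMSEQ_iff)
    then show "\<forall>\<^sub>F n in sequentially. \<bar>f n (p k) - L k\<bar> < \<epsilon> / 10"
      using \<open>0 < \<epsilon>\<close> by (auto dest!: tendstoD[of _ _ _ "\<epsilon> / 10"] simp: dist_real_def)
  qed
  then have "\<forall>\<^sub>F n in sequentially. (\<forall>k\<in>{..Suc M}. \<bar>f n (p k) - L k\<bar> < \<epsilon> / 10) \<and> e n < \<epsilon> / 5"
    using \<open>0 < \<epsilon>\<close> by (intro eventually_conj eventually_ball_finite order_tendstoD(2)[OF e]) auto
  then obtain N where N: "\<And>n. N \<le> n \<Longrightarrow> (\<forall>k\<le>Suc M. \<bar>f n (p k) - L k\<bar> < \<epsilon> / 10) \<and> e n < \<epsilon> / 5"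
    by (auto simp: eventually_sequentially)
  have "dist (f m t) (f n t) < \<epsilon>" if "t \<in> {0..T}" "N \<le> m" "N \<le> n" for t m n
  proof -
    obtain k where k: "k \<le> Suc M" "\<bar>t - p k\<bar> \<le> T / real (Suc M)"
      using grid_point_near[OF T \<open>t \<in> {0..T}\<close>] unfolding p_def by blast
    have "K * \<bar>t - p k\<bar> \<le> \<bar>K\<bar> * (T / real (Suc M))"
      using k(2) by (metis abs_ge_zero abs_ge_self mult_mono order_trans)
    moreover have "\<bar>f m (p k) - L k\<bar> < \<epsilon> / 10" "\<bar>f n (p k) - L k\<bar> < \<epsilon> / 10"
      "e m < \<epsilon> / 5" "e n < \<epsilon> / 5"
      using N[OF \<open>N \<le> m\<close>] N[OF \<open>N \<le> n\<close>] k(1) by auto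
    ultimately show ?thesis
      using lip[OF \<open>t \<in> {0..T}\<close> p[OF k(1)], of m] lip[OF \<open>t \<in> {0..T}\<close> p[OF k(1)], of n] M
      unfolding dist_real_def by linarith
  qed
  then show "\<exists>N. \<forall>t\<in>{0..T}. \<forall>m\<ge>N. \<forall>n\<ge>N. dist (f m t) (f n t) < \<epsilon>"
    by blast
qed

lemma asymptotically_lipschitz_convergent_subseq:
  fixes f :: "nat \<Rightarrow> 'i::countable \<Rightarrow> real \<Rightarrow> real"
  assumes T: "0 < T" and K: "0 \<le> K" and e: "e \<longlonglongrightarrow> 0"
    and bound: "\<And>n i t. t \<in> {0..T} \<Longrightarrow> \<bar>f n i t\<bar> \<le> B"
    and lip: "\<And>n i x y. x \<in> {0..T} \<Longrightarrow> y \<in> {0..T} \<Longrightarrow> \<bar>f n i x - f n i y\<bar> \<le> K * \<bar>x - y\<bar> + e n"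
  obtains s g where "strict_mono s"
    and "\<And>i. uniform_limit {0..T} (\<lambda>n. f (s n) i) (g i) sequentially"
    and "\<And>i. K-lipschitz_on {0..T} (g i)"
    and "\<And>i t. t \<in> {0..T} \<Longrightarrow> \<bar>g i t\<bar> \<le> B"
proof -
  define grid where "grid M k = min T (real k * T / real (Suc M))" for M k :: nat
  have "grid M k \<in> {0..T}" for M k
    using T by (simp add: grid_def)
  then have "bounded (range (\<lambda>n. f n i (grid M k)))" for i M k
    using bound unfolding bounded_real by blast
  then obtain s where s: "strict_mono s"
    and s_conv: "\<And>i M k. convergent (\<lambda>n. f (s n) i (grid M k))"
    using bounded_family_convergent_subseq[of "\<lambda>(i, M, k) n. f n i (grid M k)"] by auto
  define g where "g i t = lim (\<lambda>n. f (s n) i t)" for i t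
  have es: "(\<lambda>n. e (s n)) \<longlonglongrightarrow> 0"
    using LIMSEQ_subseq_LIMSEQ[OF e s] by (simp add: o_def)
  have "uniformly_Cauchy_on {0..T} (\<lambda>n. f (s n) i)" for i
  proof (rule uniformly_Cauchy_on_if_grid_convergent[OF T es lip])
    fix M k :: nat
    assume "k \<le> Suc M"
    then have "grid M k = real k * T / real (Suc M)"
      using grid_point_mem[OF T] by (simp add: grid_def)
    then show "convergent (\<lambda>n. f (s n) i (real k * T / real (Suc M)))"
      using s_conv by metis
  qed
  then have lim: "uniform_limit {0..T} (\<lambda>n. f (s n) i) (g i) sequentially" for i
    using Cauchy_uniformly_convergent uniformly_convergent_uniform_limit_iff
    unfolding g_def[abs_def] by blast
  have "K-lipschitz_on {0..T} (g i)" for i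
    by (rule lipschitz_on_limit[OF K es, where f = "\<lambda>n. f (s n) i"])
      (use lip tendsto_uniform_limitI[OF lim] in \<open>auto simp: dist_real_def\<close>)
  moreover have "\<bar>g i t\<bar> \<le> B" if "t \<in> {0..T}" for i t
    by (rule LIMSEQ_le_const2[OF tendsto_rabs[OF tendsto_uniform_limitI[OF lim that]]])
      (use bound that in auto)
  ultimately show thesis
    using that s lim by blast
qed

lemma power2_le_if_abs_le: "\<bar>x\<bar> \<le> D \<Longrightarrow> x\<^sup>2 \<le> (D::real)\<^sup>2"
  by (metis abs_ge_zero power2_abs power_mono)

lemma summable_wnorm_terms:
  assumes "\<And>i. \<bar>x i\<bar> \<le> D"
  shows "summable (\<lambda>i. (1/2::real) ^ i * (x i)\<^sup>2)"
proof (rule summable_comparison_test)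
  show "summable (\<lambda>i. D\<^sup>2 * (1/2::real) ^ i)"
    by (intro summable_mult summable_geometric) simp
  show "\<exists>N. \<forall>i\<ge>N. norm ((1/2::real) ^ i * (x i)\<^sup>2) \<le> D\<^sup>2 * (1/2) ^ i"
    using power2_le_if_abs_le[OF assms] by (auto intro!: exI[of _ 0] simp: mult.commute)
qed

lemma wnorm_nonneg:
  assumes "\<And>i. \<bar>x i\<bar> \<le> D"
  shows "0 \<le> wnorm x"
  unfolding wnorm_def by (simp add: suminf_nonneg summable_wnorm_terms[OF assms])

lemma abs_le_wnorm:
  assumes "\<And>i. \<bar>x i\<bar> \<le> D"
  shows "\<bar>x j\<bar> \<le> sqrt (2 ^ j) * wnorm x"
proof -
  have "(1/2::real) ^ j * (x j)\<^sup>2 \<le> (\<Sum>i. (1/2) ^ i * (x i)\<^sup>2)"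
    using sum_le_suminf[OF summable_wnorm_terms[OF assms], of "{j}"] by simp
  then have "(x j)\<^sup>2 \<le> 2 ^ j * (\<Sum>i. (1/2) ^ i * (x i)\<^sup>2)"
    by (simp add: power_one_over field_simps)
  then have "sqrt ((x j)\<^sup>2) \<le> sqrt (2 ^ j * (\<Sum>i. (1/2) ^ i * (x i)\<^sup>2))"
    by (rule real_sqrt_le_mono)
  then show ?thesis
    by (simp add: wnorm_def real_sqrt_mult)
qed

lemma wnorm_le:
  assumes D: "\<And>i. \<bar>x i\<bar> \<le> D" and \<eta>: "\<And>i. i < M \<Longrightarrow> \<bar>x i\<bar> \<le> \<eta>"
  shows "wnorm x \<le> sqrt (2 * \<eta>\<^sup>2 + 2 * D\<^sup>2 * (1/2) ^ M)"
proof -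
  define f where "f i = (1/2::real) ^ i * (x i)\<^sup>2" for i
  have f: "summable f"
    unfolding f_def by (rule summable_wnorm_terms[OF D])
  have geom: "(\<Sum>i. c * (1/2::real) ^ i) = 2 * c" for c
    by (subst suminf_mult) (simp_all add: suminf_geometric)
  have "(\<Sum>i. f (i + M)) \<le> (\<Sum>i. D\<^sup>2 * (1/2) ^ M * (1/2) ^ i)"
  proof (rule suminf_le)
    show "f (i + M) \<le> D\<^sup>2 * (1/2) ^ M * (1/2) ^ i" for i
      using power2_le_if_abs_le[OF D] by (simp add: f_def power_add mult_ac)
  qed (use f in \<open>simp_all add: summable_iff_shift summable_geometric\<close>)
  moreover have "(\<Sum>i<M. f i) \<le> (\<Sum>i<M. \<eta>\<^sup>2 * (1/2) ^ i)"
    using power2_le_if_abs_le[OF \<eta>] by (intro sum_mono) (simp add: f_def mult.commute)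
  moreover have "(\<Sum>i<M. \<eta>\<^sup>2 * (1/2::real) ^ i) \<le> (\<Sum>i. \<eta>\<^sup>2 * (1/2) ^ i)"
    by (intro sum_le_suminf summable_mult summable_geometric) auto
  ultimately have "suminf f \<le> 2 * \<eta>\<^sup>2 + 2 * D\<^sup>2 * (1/2) ^ M"
    using suminf_split_initial_segment[OF f, of M] geom by simp
  then show ?thesis
    unfolding wnorm_def f_def[symmetric] by (rule real_sqrt_le_mono)
qed

lemma dZ_tendsto_zero:
  fixes F :: "nat \<Rightarrow> real \<Rightarrow> seq" and G :: "real \<Rightarrow> seq"
  assumes T: "0 \<le> T" and D: "\<And>n t j. t \<in> {0..T} \<Longrightarrow> \<bar>F n t j - G t j\<bar> \<le> D"
    and lim: "\<And>j. uniform_limit {0..T} (\<lambda>n t. F n t j) (\<lambda>t. G t j) sequentially"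
  shows "(\<lambda>n. dZ T (F n) G) \<longlonglongrightarrow> 0"
proof (rule LIMSEQ_I)
  fix r :: real
  assume "0 < r"
  have "(\<lambda>M. 2 * D\<^sup>2 * (1/2::real) ^ M) \<longlonglongrightarrow> 0"
    by (intro tendsto_mult_right_zero LIMSEQ_power_zero) simp
  then obtain M where M: "2 * D\<^sup>2 * (1/2) ^ M < r\<^sup>2 / 2"
    using order_tendstoD(2)[of _ 0 sequentially "r\<^sup>2 / 2"] \<open>0 < r\<close>
    unfolding eventually_sequentially by force
  have "\<forall>\<^sub>F n in sequentially. \<forall>j\<in>{..<M}. \<forall>t\<in>{0..T}. dist (F n t j) (G t j) < r / 2"
    using \<open>0 < r\<close> by (intro eventually_ball_finite ballI uniform_limitD[OF lim]) auto
  then obtain N where N: "\<And>n j t. N \<le> n \<Longrightarrow> j < M \<Longrightarrow> t \<in> {0..T} \<Longrightarrow> \<bar>F n t j - G t j\<bar> < r / 2"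
    unfolding eventually_sequentially dist_real_def by blast
  define S where "S = sqrt (2 * (r / 2)\<^sup>2 + 2 * D\<^sup>2 * (1/2) ^ M)"
  have "S < sqrt (r\<^sup>2)"
    unfolding S_def using M by (intro real_sqrt_less_mono) (simp add: power_divide)
  then have "S < r"
    using \<open>0 < r\<close> by simp
  moreover have "0 \<le> dZ T (F n) G \<and> dZ T (F n) G \<le> S" if "N \<le> n" for n
  proof -
    have w: "0 \<le> wnorm (F n t - G t) \<and> wnorm (F n t - G t) \<le> S" if "t \<in> {0..T}" for t
      unfolding S_def using wnorm_nonneg[of "F n t - G t" D] wnorm_le[of "F n t - G t" D M "r / 2"]
        D[OF that] N[OF \<open>N \<le> n\<close> _ that] by fastforce
    then show ?thesis
      unfolding dZ_def using T
      by (intro conjI cSUP_upper2[of _ _ 0] bdd_aboveI2[where M = S] cSUP_least) auto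
  qed
  ultimately show "\<exists>N. \<forall>n\<ge>N. norm (dZ T (F n) G - 0) < r"
    by force
qed

lemma Vbar_infD:
  assumes "v \<in> Vbar_inf"
  shows "v 0 = v 1 + 1" and "0 \<le> v i" and "v i \<le> v 0"
proof -
  obtain s where s: "s \<in> Sbar_inf" and v: "\<And>i. v i = (\<Sum>j. s (j + i))"
    using assms unfolding Vbar_inf_def by auto
  have s0: "s 0 = 1" and s_nonneg: "\<And>i. 0 \<le> s i"
    using s by (auto simp: Sbar_inf_def Sset_def)
  have "summable (\<lambda>j. s (j + i))" for i
    using s by (simp add: Sbar_inf_def summable_Suc_iff summable_iff_shift)
  then have v_Suc: "v (Suc i) = v i - s i" for i
    using suminf_split_head[of "\<lambda>j. s (j + i)"] by (simp add: v)
  show "v 0 = v 1 + 1"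
    using v_Suc[of 0] s0 by simp
  show "0 \<le> v i"
    unfolding v by (intro suminf_nonneg) (use \<open>summable (\<lambda>j. s (j + i))\<close> s_nonneg in auto)
  show "v i \<le> v 0"
  proof (induction i)
    case (Suc i)
    then show ?case
      using v_Suc[of i] s_nonneg[of i] by simp
  qed simp
qed

definition component :: "nat \<Rightarrow> state \<Rightarrow> seq" where
  "component k x = (if k = 0 then Vc x else if k = 1 then Ac x else if k = 2 then Lc x else Cc x)"

lemma component_0_1_2_3: "component 0 = Vc" "component 1 = Ac" "component 2 = Lc" "component 3 = Cc"
  by (auto simp: component_def fun_eq_iff)

lemma event_increment_bounds:
  "0 \<le> arr_ev lam N u V i" "arr_ev lam N u V i \<le> 1 / real N"
  "0 \<le> loc_ev lam p N u V i" "loc_ev lam p N u V i \<le> 1 / real N"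
  "0 \<le> cen_ev lam p N u V i" "cen_ev lam p N u V i \<le> 1 / real N"
  by (auto simp: arr_ev_def loc_ev_def cen_ev_def)

lemma Vc_step_0: "Vc (step lam p N u x) 0 = Vc (step lam p N u x) 1 + 1"
  by (cases x) (simp add: step_def Let_def Vc_def)

lemma component_step_change:
  assumes "Vc x 0 = Vc x 1 + 1"
  shows "\<bar>component k (step lam p N u x) j - component k x j\<bar> \<le> 2 / real N"
proof -
  obtain V A L C where x: "x = (V, A, L, C)"
    by (cases x) auto
  define a l c where "a = arr_ev lam N u V" and "l = loc_ev lam p N u V" and "c = cen_ev lam p N u V"
  have bounds: "0 \<le> a i" "a i \<le> 1 / real N" "0 \<le> l i" "l i \<le> 1 / real N"
    "0 \<le> c i" "c i \<le> 1 / real N" for i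
    unfolding a_def l_def c_def by (rule event_increment_bounds)+
  have "V 0 = V 1 + 1"
    using assms by (simp add: x Vc_def)
  then have "component k (step lam p N u x) j - component k x j =
      (if k = 0 then (if j = 0 then a 1 - l 1 - c 1 else a j - l j - c j)
       else if k = 1 then a j else if k = 2 then l j else c j)"
    by (simp add: x step_def Let_def component_def Vc_def Ac_def Lc_def Cc_def a_def l_def c_def)
  then show ?thesis
    using bounds[of 1] bounds[of j] by (auto simp: abs_le_iff)
qed

lemma Vc_chain_0:
  assumes "v 0 = v 1 + 1"
  shows "Vc (chain lam p N v U m) 0 = Vc (chain lam p N v U m) 1 + 1"
proof (cases m)
  case 0
  then show ?thesis
    using assms by (simp add: Vc_def)
next
  case (Suc n)
  then show ?thesis
    by (simp only: chain.simps Vc_step_0)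
qed

lemma component_chain_0: "component k (chain lam p N v U 0) j = (if k = 0 then v j else 0)"
  by (simp add: component_def Vc_def Ac_def Lc_def Cc_def)

lemma component_chain_change:
  assumes "v 0 = v 1 + 1"
  shows "\<bar>component k (chain lam p N v U m) j - component k (chain lam p N v U m') j\<bar>
           \<le> 2 * \<bar>real m - real m'\<bar> / real N"
proof -
  have incr: "\<bar>component k (chain lam p N v U (n + d)) j - component k (chain lam p N v U n) j\<bar>
                \<le> 2 * real d / real N" for n d
  proof (induction d)
    case (Suc d)
    have "\<bar>component k (chain lam p N v U (Suc (n + d))) j - component k (chain lam p N v U (n + d)) j\<bar>
            \<le> 2 / real N"
      using component_step_change[OF Vc_chain_0[OF assms]] by simp
    moreover have "2 * real (Suc d) / real N = 2 / real N + 2 * real d / real N"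
      by (simp add: add_divide_distrib[symmetric])
    ultimately show ?case
      using Suc by simp
  qed simp
  show ?thesis
  proof (cases "m' \<le> m")
    case True
    then show ?thesis
      using incr[of m' "m - m'"] by (simp add: of_nat_diff)
  next
    case False
    then show ?thesis
      using incr[of m "m' - m"] by (simp add: of_nat_diff abs_minus_commute)
  qed
qed

lemma finite_jumps_upto:
  assumes "jump_times tau"
  shows "finite {k. 1 \<le> k \<and> tau k \<le> s}"
proof -
  obtain K where K: "\<And>k. K \<le> k \<Longrightarrow> s < tau k"
    using assms unfolding jump_times_def filterlim_at_top_dense eventually_sequentially by blast
  have "{k. 1 \<le> k \<and> tau k \<le> s} \<subseteq> {..<K}"
    using K by (auto simp: not_less[symmetric])
  then show ?thesis
    by (rule finite_subset) simp
qed

lemma WN_mono: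
  assumes "jump_times tau" "t \<le> t'"
  shows "WN tau N t \<le> WN tau N t'"
proof -
  have "real N * t \<le> real N * t'"
    using assms(2) by (simp add: mult_left_mono)
  then have "card {k. 1 \<le> k \<and> tau k \<le> real N * t} \<le> card {k. 1 \<le> k \<and> tau k \<le> real N * t'}"
    by (intro card_mono finite_jumps_upto[OF assms(1)]) auto
  then show ?thesis
    by (simp add: WN_def Wpath_def divide_right_mono)
qed

lemma card_jumps_upto_nonpos:
  assumes "jump_times tau" "s \<le> 0"
  shows "card {k. 1 \<le> k \<and> tau k \<le> s} = 0"
proof -
  have "{k. 1 \<le> k \<and> tau k \<le> s} = {}"
    using assms by (force simp: jump_times_def)
  then show ?thesis
    by (simp only: card.empty)
qed

lemma XN_0:
  assumes "jump_times tau"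
  shows "XN lam p tau U V N 0 = chain lam p N (V N) U 0"
  using card_jumps_upto_nonpos[OF assms, of 0] by (simp add: XN_def)

lemma WN_0:
  assumes "jump_times tau"
  shows "WN tau N 0 = 0"
  using card_jumps_upto_nonpos[OF assms, of 0] by (simp add: WN_def Wpath_def)

lemma component_XN_change:
  assumes "V N 0 = V N 1 + 1"
  shows "\<bar>component k (XN lam p tau U V N x) j - component k (XN lam p tau U V N y) j\<bar>
           \<le> 2 * \<bar>WN tau N x - WN tau N y\<bar>"
  using component_chain_change[OF assms]
  by (simp add: XN_def WN_def Wpath_def diff_divide_distrib[symmetric])

lemma WN_deviation_le_SUP:
  assumes tau: "jump_times tau" and lam: "0 \<le> lam" and t: "t \<in> {0..T}"
  shows "\<bar>WN tau N t - (1 + lam) * t\<bar> \<le> (SUP t\<in>{0..T}. \<bar>WN tau N t - (1 + lam) * t\<bar>)"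
proof (rule cSUP_upper[OF t], rule bdd_aboveI2)
  fix s
  assume "s \<in> {0..T}"
  then have "0 \<le> (1 + lam) * s" "(1 + lam) * s \<le> (1 + lam) * T"
    using lam by (auto intro: mult_left_mono)
  moreover have "0 \<le> WN tau N s" "WN tau N s \<le> WN tau N T"
    using WN_mono[OF tau] \<open>s \<in> {0..T}\<close> by (auto simp: WN_def Wpath_def)
  ultimately show "\<bar>WN tau N s - (1 + lam) * s\<bar> \<le> WN tau N T + (1 + lam) * T"
    by (simp add: abs_le_iff)
qed

lemma component_XN_bound:
  assumes tau: "jump_times tau" and lam: "0 \<le> lam" and V: "V N \<in> Vbar_inf" and t: "t \<in> {0..T}"
  shows "\<bar>component k (XN lam p tau U V N t) j\<bar>
           \<le> V N 0 + 2 * ((1 + lam) * T + (SUP t\<in>{0..T}. \<bar>WN tau N t - (1 + lam) * t\<bar>))"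
proof -
  have "\<bar>component k (XN lam p tau U V N 0) j\<bar> \<le> V N 0"
    using Vbar_infD(2,3)[OF V] by (simp add: XN_0[OF tau] component_chain_0 del: chain.simps)
  moreover have "(1 + lam) * t \<le> (1 + lam) * T"
    using t lam by (intro mult_left_mono) auto
  moreover have "0 \<le> WN tau N t"
    by (simp add: WN_def Wpath_def)
  ultimately show ?thesis
    using component_XN_change[of V N, OF Vbar_infD(1)[OF V], of k lam p tau U t j 0]
      WN_deviation_le_SUP[OF tau lam t, of N]
    by (simp add: WN_0[OF tau] abs_le_iff)
qed

lemma component_XN_approx_lipschitz:
  assumes tau: "jump_times tau" and lam: "0 \<le> lam" and V: "V N \<in> Vbar_inf"
    and x: "x \<in> {0..T}" and y: "y \<in> {0..T}"
  shows "\<bar>component k (XN lam p tau U V N x) j - component k (XN lam p tau U V N y) j\<bar>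
           \<le> 2 * (1 + lam) * \<bar>x - y\<bar> + 4 * (SUP t\<in>{0..T}. \<bar>WN tau N t - (1 + lam) * t\<bar>)"
proof -
  have "\<bar>(1 + lam) * x - (1 + lam) * y\<bar> = (1 + lam) * \<bar>x - y\<bar>"
    using lam by (simp add: abs_mult flip: right_diff_distrib)
  then have "\<bar>WN tau N x - WN tau N y\<bar>
      \<le> (1 + lam) * \<bar>x - y\<bar> + 2 * (SUP t\<in>{0..T}. \<bar>WN tau N t - (1 + lam) * t\<bar>)"
    using WN_deviation_le_SUP[OF tau lam x, of N] WN_deviation_le_SUP[OF tau lam y, of N] by linarith
  then show ?thesis
    using component_XN_change[of V N, OF Vbar_infD(1)[OF V], of k lam p tau U x j y]
    by (simp add: algebra_simps)
qed

lemma coordinate_tendsto_if_wnorm_tendsto: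
  assumes "(\<lambda>N. wnorm (x N - y)) \<longlonglongrightarrow> 0"
    and "\<forall>\<^sub>F N in sequentially. \<exists>D. \<forall>i. \<bar>x N i - y i\<bar> \<le> D"
  shows "(\<lambda>N. x N j) \<longlonglongrightarrow> y j"
proof -
  have "(\<lambda>N. x N j - y j) \<longlonglongrightarrow> 0"
  proof (rule Lim_null_comparison)
    show "\<forall>\<^sub>F N in sequentially. norm (x N j - y j) \<le> sqrt (2 ^ j) * wnorm (x N - y)"
      using assms(2) by eventually_elim (use abs_le_wnorm[of "x _ - y"] in auto)
    show "(\<lambda>N. sqrt (2 ^ j) * wnorm (x N - y)) \<longlonglongrightarrow> 0"
      using tendsto_mult_right_zero[OF assms(1)] by simp
  qed
  from tendsto_add[OF this tendsto_const[of "y j"]] show ?thesis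
    by simp
qed

lemma Vbar_inf_coordinate_tendsto:
  assumes V: "\<And>N. 1 \<le> N \<Longrightarrow> V N \<in> Vbar_inf" and v: "v \<in> Vbar_inf"
    and "(\<lambda>N. wnorm (V N - v)) \<longlonglongrightarrow> 0"
  shows "(\<lambda>N. V N j) \<longlonglongrightarrow> v j"
proof (rule coordinate_tendsto_if_wnorm_tendsto[OF assms(3)])
  have "\<bar>V N i - v i\<bar> \<le> V N 0 + v 0" if "1 \<le> N" for N i
    using Vbar_infD(2,3)[OF V[OF that], of i] Vbar_infD(2,3)[OF v, of i] by (auto simp: abs_le_iff)
  then show "\<forall>\<^sub>F N in sequentially. \<exists>D. \<forall>i. \<bar>V N i - v i\<bar> \<le> D"
    unfolding eventually_sequentially by blast
qed

lemma XN_uniformly_convergent_subseq: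
  fixes V :: "nat \<Rightarrow> seq" and r :: "nat \<Rightarrow> nat"
  assumes lam: "0 \<le> lam" and T: "0 < T" and tau: "jump_times tau"
    and V: "\<And>N. 1 \<le> N \<Longrightarrow> V N \<in> Vbar_inf" and v: "v \<in> Vbar_inf"
    and init: "(\<lambda>N. wnorm (V N - v)) \<longlonglongrightarrow> 0"
    and dev: "(\<lambda>N. SUP t\<in>{0..T}. \<bar>WN tau N t - (1 + lam) * t\<bar>) \<longlonglongrightarrow> 0"
    and r: "strict_mono r"
  obtains s B G where "strict_mono s"
    and "\<And>n k j t. t \<in> {0..T} \<Longrightarrow> \<bar>component k (XN lam p tau U V (Suc (r n)) t) j\<bar> \<le> B"
    and "\<And>k j t. t \<in> {0..T} \<Longrightarrow> \<bar>G k t j\<bar> \<le> B"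
    and "\<And>k j. uniform_limit {0..T} (\<lambda>n t. component k (XN lam p tau U V (Suc (r (s n))) t) j)
                  (\<lambda>t. G k t j) sequentially"
    and "\<And>k j. (2 * (1 + lam))-lipschitz_on {0..T} (\<lambda>t. G k t j)"
proof -
  define E where "E N = (SUP t\<in>{0..T}. \<bar>WN tau N t - (1 + lam) * t\<bar>)" for N
  define f where "f n = (\<lambda>(k, j) t. component k (XN lam p tau U V (Suc (r n)) t) j)" for n
  obtain B0 where B0: "\<And>N. V N 0 \<le> B0"
    using convergent_imp_Bseq[OF convergentI[OF Vbar_inf_coordinate_tendsto[OF V v init, of 0]]]
    unfolding Bseq_def real_norm_def by (blast dest: abs_le_D1)
  obtain BE where BE: "\<And>N. E N \<le> BE"
    using convergent_imp_Bseq[OF convergentI[OF dev]]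
    unfolding Bseq_def E_def real_norm_def by (blast dest: abs_le_D1)
  define B where "B = B0 + 2 * ((1 + lam) * T + BE)"
  have V_Suc: "V (Suc m) \<in> Vbar_inf" for m
    using V by simp
  have bound: "\<bar>f n i t\<bar> \<le> B" if "t \<in> {0..T}" for n i t
    using component_XN_bound[where V = V and N = "Suc (r n)" and k = "fst i" and j = "snd i"
        and p = p and U = U, OF tau lam V_Suc that] B0[of "Suc (r n)"] BE[of "Suc (r n)"]
    unfolding f_def B_def E_def split_beta by argo
  have lip: "\<bar>f n i x - f n i y\<bar> \<le> 2 * (1 + lam) * \<bar>x - y\<bar> + 4 * E (Suc (r n))"
    if "x \<in> {0..T}" "y \<in> {0..T}" for n i x y
    using component_XN_approx_lipschitz[where V = V and N = "Suc (r n)" and k = "fst i" and j = "snd i"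
        and p = p and U = U, OF tau lam V_Suc that]
    unfolding f_def E_def split_beta by simp
  have e_lim: "(\<lambda>n. 4 * E (Suc (r n))) \<longlonglongrightarrow> 0"
    using LIMSEQ_subseq_LIMSEQ[OF dev, of "\<lambda>n. Suc (r n)"] r
    by (intro tendsto_mult_right_zero) (auto simp: E_def o_def strict_mono_def)
  have K_nonneg: "0 \<le> 2 * (1 + lam)"
    using lam by simp
  obtain s g where "strict_mono s"
    and "\<And>i. uniform_limit {0..T} (\<lambda>n. f (s n) i) (g i) sequentially"
    and "\<And>i. (2 * (1 + lam))-lipschitz_on {0..T} (g i)"
    and "\<And>i t. t \<in> {0..T} \<Longrightarrow> \<bar>g i t\<bar> \<le> B"
    using asymptotically_lipschitz_convergent_subseq[where f = f, OF T K_nonneg e_lim bound lip] by blast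
  then show thesis
    using bound by (intro that[of s B "\<lambda>k t j. g (k, j) t"]) (auto simp: f_def)
qed

lemma XN_convergent_subseq:
  fixes V :: "nat \<Rightarrow> seq" and r :: "nat \<Rightarrow> nat"
  assumes lam: "0 \<le> lam" and T: "0 < T" and tau: "jump_times tau"
    and V: "\<And>N. 1 \<le> N \<Longrightarrow> V N \<in> Vbar_inf" and v: "v \<in> Vbar_inf"
    and init: "(\<lambda>N. wnorm (V N - v)) \<longlonglongrightarrow> 0"
    and dev: "(\<lambda>N. SUP t\<in>{0..T}. \<bar>WN tau N t - (1 + lam) * t\<bar>) \<longlonglongrightarrow> 0"
    and r: "strict_mono r"
  obtains s G where "strict_mono s"
    and "\<And>k. (\<lambda>i. dZ T (\<lambda>t. component k (XN lam p tau U V (Suc (r (s i))) t)) (G k)) \<longlonglongrightarrow> 0"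
    and "\<And>k. G k 0 = (if k = 0 then v else (\<lambda>_. 0))"
    and "\<And>k j. (2 * (1 + lam))-lipschitz_on {0..T} (\<lambda>t. G k t j)"
proof (rule XN_uniformly_convergent_subseq[where p = p and U = U, OF lam T tau V v init dev r])
  fix s B G
  assume s: "strict_mono s"
    and X_bound: "\<And>n k j t. t \<in> {0..T} \<Longrightarrow> \<bar>component k (XN lam p tau U V (Suc (r n)) t) j\<bar> \<le> B"
    and G_bound: "\<And>k j t. t \<in> {0..T} \<Longrightarrow> \<bar>G k t j\<bar> \<le> B"
    and lim: "\<And>k j. uniform_limit {0..T} (\<lambda>n t. component k (XN lam p tau U V (Suc (r (s n))) t) j)
                  (\<lambda>t. G k t j) sequentially"
    and G_lip: "\<And>k j. (2 * (1 + lam))-lipschitz_on {0..T} (\<lambda>t. G k t j)"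
  have "(\<lambda>i. dZ T (\<lambda>t. component k (XN lam p tau U V (Suc (r (s i))) t)) (G k)) \<longlonglongrightarrow> 0" for k
  proof (rule dZ_tendsto_zero[OF _ _ lim])
    show "\<bar>component k (XN lam p tau U V (Suc (r (s n))) t) j - G k t j\<bar> \<le> 2 * B"
      if "t \<in> {0..T}" for n t j
      using X_bound[OF that, where n = "s n" and k = k and j = j] G_bound[OF that, of k j] by (simp add: abs_le_iff)
  qed (use T in simp)
  moreover have "G k 0 = (if k = 0 then v else (\<lambda>_. 0))" for k
  proof
    fix j
    have "(\<lambda>n. component k (XN lam p tau U V (Suc (r (s n))) 0) j) \<longlonglongrightarrow> G k 0 j"
      using T by (intro tendsto_uniform_limitI[OF lim]) auto
    moreover have "(\<lambda>n. component k (XN lam p tau U V (Suc (r (s n))) 0) j) \<longlonglongrightarrow> (if k = 0 then v j else 0)"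
    proof -
      have "strict_mono (\<lambda>n. Suc (r (s n)))"
        using r s by (simp add: strict_mono_def)
      from LIMSEQ_subseq_LIMSEQ[OF Vbar_inf_coordinate_tendsto[OF V v init] this]
      show ?thesis
        by (simp add: o_def XN_0[OF tau] component_chain_0 del: chain.simps)
    qed
    ultimately show "G k 0 j = (if k = 0 then v else (\<lambda>_. 0)) j"
      using LIMSEQ_unique by fastforce
  qed
  ultimately show thesis
    using that s G_lip by blast
qed

lemma Xproc_convergent_subseq:
  fixes \<omega> :: "'w \<times> 'u \<times> 'z" and r :: "nat \<Rightarrow> nat"
  assumes lam: "0 \<le> lam" and T: "0 < T" and tau: "\<forall>w. jump_times (tau w)"
    and V: "\<forall>z N. 1 \<le> N \<longrightarrow> V z N \<in> Vbar_inf" and v: "v \<in> Vbar_inf"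
    and init: "(\<lambda>N. wnorm (Vc (Xproc lam p tau U V \<omega> N 0) - v)) \<longlonglongrightarrow> 0"
    and \<omega>: "\<omega> \<in> Cset lam T tau U" and r: "strict_mono r"
  obtains s G where "strict_mono s"
    and "\<And>k. (\<lambda>i. dZ T (\<lambda>t. component k (Xproc lam p tau U V \<omega> (Suc (r (s i))) t)) (G k)) \<longlonglongrightarrow> 0"
    and "\<And>k. G k 0 = (if k = 0 then v else (\<lambda>_. 0))"
    and "\<And>k j. (2 * (1 + lam))-lipschitz_on {0..T} (\<lambda>t. G k t j)"
proof -
  obtain w u z where \<omega>_eq: "\<omega> = (w, u, z)"
    by (cases \<omega>)
  have X: "Xproc lam p tau U V \<omega> = XN lam p (tau w) (U u) (V z)"
    by (simp add: \<omega>_eq Xproc_def fun_eq_iff)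
  have tau_w: "jump_times (tau w)" and V_z: "\<And>N. 1 \<le> N \<Longrightarrow> V z N \<in> Vbar_inf"
    using tau V by auto
  have "(\<lambda>N. wnorm (V z N - v)) \<longlonglongrightarrow> 0"
    using init by (simp add: X XN_0[OF tau_w] Vc_def)
  moreover have "(\<lambda>N. SUP t\<in>{0..T}. \<bar>WN (tau w) N t - (1 + lam) * t\<bar>) \<longlonglongrightarrow> 0"
    using \<omega> by (simp add: \<omega>_eq Cset_def)
  ultimately show thesis
    using XN_convergent_subseq[where V = "V z" and p = p and U = "U u", OF lam T tau_w V_z v _ _ r] that
    unfolding X by blast
qed

theorem proposition1:
  fixes lam p :: real
  assumes "0 \<le> lam" "lam < 1" "0 \<le> p" "p \<le> 1"
  shows "\<exists>L>0. \<forall>T>0. \<forall>(tau :: 'w \<Rightarrow> nat \<Rightarrow> real) (U :: 'u \<Rightarrow> nat \<Rightarrow> real)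
            (V0 :: 'z \<Rightarrow> nat \<Rightarrow> seq) (v0 :: seq).
    ((\<forall>w. jump_times (tau w)) \<and>
     (\<forall>u k. 1 \<le> k \<longrightarrow> 0 \<le> U u k \<and> U u k \<le> 1) \<and>
     (\<forall>z N. 1 \<le> N \<longrightarrow> V0 z N \<in> Vbar_inf \<and> (\<forall>i. \<exists>m::int. V0 z N i = real_of_int m / real N)) \<and>
     v0 \<in> Vbar_inf \<and>
     (\<forall>\<omega>\<in>Cset lam T tau U.
        (\<lambda>N. wnorm (Vc (Xproc lam p tau U V0 \<omega> N 0) - v0)) \<longlonglongrightarrow> 0))
    \<longrightarrow>
    (\<forall>\<omega>\<in>Cset lam T tau U. \<forall>r::nat \<Rightarrow> nat. strict_mono r \<longrightarrow>
       (\<exists>(s::nat \<Rightarrow> nat) (v::real \<Rightarrow> seq) (a::real \<Rightarrow> seq) (l::real \<Rightarrow> seq) (c::real \<Rightarrow> seq).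
          strict_mono s \<and>
          (\<lambda>i. dZ T (\<lambda>t. Vc (Xproc lam p tau U V0 \<omega> (Suc (r (s i))) t)) v) \<longlonglongrightarrow> 0 \<and>
          (\<lambda>i. dZ T (\<lambda>t. Ac (Xproc lam p tau U V0 \<omega> (Suc (r (s i))) t)) a) \<longlonglongrightarrow> 0 \<and>
          (\<lambda>i. dZ T (\<lambda>t. Lc (Xproc lam p tau U V0 \<omega> (Suc (r (s i))) t)) l) \<longlonglongrightarrow> 0 \<and>
          (\<lambda>i. dZ T (\<lambda>t. Cc (Xproc lam p tau U V0 \<omega> (Suc (r (s i))) t)) c) \<longlonglongrightarrow> 0 \<and>
          v 0 = v0 \<and> a 0 = (\<lambda>_. 0) \<and> l 0 = (\<lambda>_. 0) \<and> c 0 = (\<lambda>_. 0) \<and>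
          (\<forall>j. \<forall>x\<in>{0..T}. \<forall>y\<in>{0..T}.
             \<bar>v x j - v y j\<bar> \<le> L * \<bar>x - y\<bar> \<and> \<bar>a x j - a y j\<bar> \<le> L * \<bar>x - y\<bar> \<and>
             \<bar>l x j - l y j\<bar> \<le> L * \<bar>x - y\<bar> \<and> \<bar>c x j - c y j\<bar> \<le> L * \<bar>x - y\<bar>)))"
proof (intro exI[of _ "2 * (1 + lam)"] conjI allI impI ballI, goal_cases)
  case (2 T tau U V0 v0 \<omega> r)
  obtain s G where "strict_mono s"
    and conv: "\<And>k. (\<lambda>i. dZ T (\<lambda>t. component k (Xproc lam p tau U V0 \<omega> (Suc (r (s i))) t)) (G k))
                 \<longlonglongrightarrow> 0"
    and G_0: "\<And>k. G k 0 = (if k = 0 then v0 else (\<lambda>_. 0))"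
    and G_lip: "\<And>k j. (2 * (1 + lam))-lipschitz_on {0..T} (\<lambda>t. G k t j)"
    by (rule Xproc_convergent_subseq[OF assms(1), where V = V0 and v = v0 and p = p and \<omega> = \<omega>])
      (use 2 in auto)
  have "\<bar>G k x j - G k y j\<bar> \<le> 2 * (1 + lam) * \<bar>x - y\<bar>" if "x \<in> {0..T}" "y \<in> {0..T}" for k j x y
    using lipschitz_onD[OF G_lip that] by (simp add: dist_real_def)
  with \<open>strict_mono s\<close> conv[of 0] conv[of 1] conv[of 2] conv[of 3] show ?case
    unfolding component_0_1_2_3
    by (intro exI[of _ s] exI[of _ "G 0"] exI[of _ "G 1"] exI[of _ "G 2"] exI[of _ "G 3"] conjI allI ballI)
      (simp_all add: G_0)
qed (use assms in simp)

end
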